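(* Let $n\ge2$. The permutation representation $\rho_2^{\mathbb{C}}$ of $S_n$ does not unite conjugacy classes: if $\sigma,\tau\in S_n$ and $\rho_2^{\mathbb{C}}(\sigma)$ is similar to $\rho_2^{\mathbb{C}}(\tau)$ in $GL(n(n-1),\mathbb{C})$, then $\sigma$ and $\tau$ are conjugate in $S_n$.
   Context: For $1\le k\le n$, $\rho_k^{\mathbb{F}}$ denotes the permutation representation over the field $\mathbb{F}$ of $S_n$ arising from its action on ordered $k$-tuples $(i_1,\dots,i_k)$ of distinct elements of $\{1,\dots,n\}$, given by $\pi\cdot(i_1,\dots,i_k)=(\pi(i_1),\dots,\pi(i_k))$. A representation $T$ of $G$ unites conjugacy classes if there are non-conjugate $\sigma,\tau\in G$ with $T(\sigma),T(\tau)$ similar matrices. *)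

theory Defs
  imports "HOL-Combinatorics.Permutations" "Jordan_Normal_Form.Matrix"
begin

text \<open>Ordered pairs (i,j) of distinct elements of {1..n}, enumerated in a fixed order;
  they index the standard basis of the permutation module of rho_2.\<close>
definition pairs2 :: "nat \<Rightarrow> (nat \<times> nat) list" where
  "pairs2 n = [(i, j). i \<leftarrow> [1..<Suc n], j \<leftarrow> [1..<Suc n], i \<noteq> j]"

definition rho2 :: "nat \<Rightarrow> (nat \<Rightarrow> nat) \<Rightarrow> complex mat" where
  "rho2 n \<sigma> = mat (n * (n - 1)) (n * (n - 1))
     (\<lambda>(r, c). if pairs2 n ! r = (\<sigma> (fst (pairs2 n ! c)), \<sigma> (snd (pairs2 n ! c)))
               then 1 else 0)"

definition conj_Sn :: "nat \<Rightarrow> (nat \<Rightarrow> nat) \<Rightarrow> (nat \<Rightarrow> nat) \<Rightarrow> bool" where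
  "conj_Sn n \<sigma> \<tau> = (\<exists>\<pi>. \<pi> permutes {1..n} \<and> \<tau> = \<pi> \<circ> \<sigma> \<circ> Hilbert_Choice.inv \<pi>)"

end

theory Submission
  imports Defs "HOL-Combinatorics.Orbits" "HOL-Combinatorics.Cycles"
begin

(* The trace of rho2(sigma^k) counts the ordered pairs of distinct fixed points of sigma^k,
  so it equals f (f - 1) where f is the number of fixed points of sigma^k; similar matrices
  have equal traces of all powers. Writing c d for the number of points on d-cycles of sigma,
  f = (sum over d dvd k of c d), and d divides c d. As x (x - 1) determines x up to confusing
  0 with 1, induction on k recovers every c k from these traces; the one ambiguous case,
  c 1 in {0, 1}, is ruled out by a congruence modulo the least d >= 2 at which c or c' is
  nonzero. Equal counts c mean equal cycle types, hence conjugacy. *)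

section \<open>Traces of permutation matrices\<close>

definition trace :: "'a :: comm_semiring_1 mat \<Rightarrow> 'a" where
  "trace A = (\<Sum>i < dim_row A. A $$ (i, i))"

lemma trace_mult_comm:
  assumes "A \<in> carrier_mat n m" and "B \<in> carrier_mat m n"
  shows "trace (A * B) = trace (B * A)"
proof -
  have "trace (A * B) = (\<Sum>i<n. \<Sum>j<m. A $$ (i, j) * B $$ (j, i))"
    using assms by (auto simp: trace_def scalar_prod_def intro!: sum.cong)
  also have "\<dots> = (\<Sum>j<m. \<Sum>i<n. B $$ (j, i) * A $$ (i, j))"
    by (subst sum.swap) (simp add: mult.commute)
  also have "\<dots> = trace (B * A)"
    using assms by (auto simp: trace_def scalar_prod_def intro!: sum.cong)
  finally show ?thesis .
qed

lemma similar_mat_trace_power: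
  assumes "similar_mat A B"
  shows "trace (A ^\<^sub>m k) = trace (B ^\<^sub>m k)"
proof -
  from assms obtain P Q where "similar_mat_wit A B P Q"
    unfolding similar_mat_def by blast
  then have wit: "similar_mat_wit (A ^\<^sub>m k) (B ^\<^sub>m k) P Q"
    by (rule similar_mat_wit_pow)
  define N where "N = dim_row (A ^\<^sub>m k)"
  note carrier = similar_mat_witD[OF N_def wit]
  have "trace (A ^\<^sub>m k) = trace (P * (B ^\<^sub>m k * Q))"
    using carrier by (simp add: assoc_mult_mat[of P N N _ N _ N])
  also have "\<dots> = trace (B ^\<^sub>m k * Q * P)"
    using carrier by (intro trace_mult_comm[of _ N N]) auto
  also have "\<dots> = trace (B ^\<^sub>m k)"
    using carrier by (simp add: assoc_mult_mat[of _ N N _ N _ N] right_mult_one_mat)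
  finally show ?thesis .
qed

definition perm_mat :: "'a list \<Rightarrow> ('a \<Rightarrow> 'a) \<Rightarrow> 'b :: semiring_1 mat" where
  "perm_mat xs f = mat (length xs) (length xs) (\<lambda>(r, c). if xs ! r = f (xs ! c) then 1 else 0)"

lemma dim_perm_mat [simp]:
  "dim_row (perm_mat xs f) = length xs" "dim_col (perm_mat xs f) = length xs"
  by (simp_all add: perm_mat_def)

lemma perm_mat_mult:
  assumes "distinct xs" and "\<And>x. x \<in> set xs \<Longrightarrow> g x \<in> set xs"
  shows "perm_mat xs f * perm_mat xs g = (perm_mat xs (f \<circ> g) :: 'b :: semiring_1 mat)"
proof (rule eq_matI)
  fix r c assume "r < dim_row (perm_mat xs (f \<circ> g) :: 'b mat)" "c < dim_col (perm_mat xs (f \<circ> g) :: 'b mat)"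
  then have r: "r < length xs" and c: "c < length xs" by simp_all
  then obtain m where m: "m < length xs" "xs ! m = g (xs ! c)"
    using assms(2) by (metis in_set_conv_nth nth_mem)
  have unique: "xs ! i = g (xs ! c) \<longleftrightarrow> i = m" if "i < length xs" for i
    using m that assms(1) nth_eq_iff_index_eq by metis
  have "(perm_mat xs f * perm_mat xs g :: 'b mat) $$ (r, c) =
      (\<Sum>i<length xs. (if xs ! r = f (xs ! i) then 1 else 0) * (if xs ! i = g (xs ! c) then 1 else 0))"
    using r c by (auto simp: perm_mat_def scalar_prod_def intro!: sum.cong)
  also have "\<dots> = (\<Sum>i<length xs. if i = m then (if xs ! r = f (xs ! m) then 1 else 0) else 0)"
    by (rule sum.cong) (auto simp: unique)
  also have "\<dots> = (perm_mat xs (f \<circ> g) :: 'b mat) $$ (r, c)"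
    using r c m by (simp add: perm_mat_def)
  finally show "(perm_mat xs f * perm_mat xs g :: 'b mat) $$ (r, c) = perm_mat xs (f \<circ> g) $$ (r, c)" .
qed (auto simp: perm_mat_def)

lemma perm_mat_id: "distinct xs \<Longrightarrow> perm_mat xs (\<lambda>x. x) = 1\<^sub>m (length xs)"
  by (rule eq_matI) (auto simp: perm_mat_def nth_eq_iff_index_eq)

lemma perm_mat_power:
  assumes "distinct xs" and "\<And>x. x \<in> set xs \<Longrightarrow> f x \<in> set xs"
  shows "(perm_mat xs f :: 'b :: semiring_1 mat) ^\<^sub>m k = perm_mat xs (f ^^ k)"
proof (induction k)
  case 0
  show ?case by (simp add: perm_mat_id[OF assms(1)] id_def)
next
  case (Suc k)
  have "(perm_mat xs f :: 'b mat) ^\<^sub>m Suc k = perm_mat xs (f ^^ k) * perm_mat xs f"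
    using Suc by simp
  also have "\<dots> = perm_mat xs (f ^^ k \<circ> f)"
    by (rule perm_mat_mult[OF assms])
  finally show ?case by (simp only: funpow_Suc_right)
qed

lemma trace_perm_mat:
  assumes "distinct xs"
  shows "trace (perm_mat xs f) = of_nat (card {x \<in> set xs. f x = x})"
proof -
  have "trace (perm_mat xs f) = (\<Sum>i<length xs. (\<lambda>x. if f x = x then 1 else 0) (xs ! i))"
    by (auto simp: trace_def perm_mat_def intro!: sum.cong)
  also have "\<dots> = (\<Sum>x\<in>set xs. if f x = x then 1 else 0)"
    using assms by (intro sum.reindex_bij_betw) (auto simp: bij_betw_def inj_on_nth in_set_conv_nth)
  also have "\<dots> = of_nat (card {x \<in> set xs. f x = x})"
    by (simp add: sum.If_cases Int_def conj_commute)
  finally show ?thesis .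
qed

lemma set_pairs2: "set (pairs2 n) = {(i, j). i \<in> {1..n} \<and> j \<in> {1..n} \<and> i \<noteq> j}"
  by (auto simp: pairs2_def)

lemma distinct_pairs2: "distinct (pairs2 n)"
proof -
  have row: "distinct [(i, j). j \<leftarrow> ys, i \<noteq> j]" if "distinct ys" for i :: nat and ys
    using that by (induction ys) auto
  have "distinct [(i, j). i \<leftarrow> xs, j \<leftarrow> ys, i \<noteq> j]" if "distinct xs" "distinct ys"
    for xs ys :: "nat list"
    using that by (induction xs) (auto simp: row)
  then show ?thesis unfolding pairs2_def by simp
qed

lemma card_off_diagonal:
  assumes "finite F"
  shows "card {(i, j). i \<in> F \<and> j \<in> F \<and> i \<noteq> j} = card F * (card F - 1)"
proof -
  have "{(i, j). i \<in> F \<and> j \<in> F \<and> i \<noteq> j} = F \<times> F - (\<lambda>x. (x, x)) ` F" by auto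
  moreover have "card ((\<lambda>x. (x, x)) ` F) = card F" by (rule card_image) (auto simp: inj_on_def)
  moreover have "card (F \<times> F - (\<lambda>x. (x, x)) ` F) = card (F \<times> F) - card ((\<lambda>x. (x, x)) ` F)"
    using assms by (intro card_Diff_subset) auto
  ultimately show ?thesis
    by (simp add: card_cartesian_product diff_mult_distrib2)
qed

lemma length_pairs2: "length (pairs2 n) = n * (n - 1)"
  using distinct_card[OF distinct_pairs2, of n] card_off_diagonal[of "{1..n}"]
  by (simp add: set_pairs2)

lemma rho2_eq_perm_mat: "rho2 n \<sigma> = perm_mat (pairs2 n) (map_prod \<sigma> \<sigma>)"
  by (simp add: rho2_def perm_mat_def length_pairs2 map_prod_def split_beta)

lemma rho2_power:
  assumes "\<sigma> permutes {1..n}"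
  shows "rho2 n \<sigma> ^\<^sub>m k = rho2 n (\<sigma> ^^ k)"
proof -
  have "map_prod \<sigma> \<sigma> ^^ k = map_prod (\<sigma> ^^ k) (\<sigma> ^^ k)"
    by (induction k) (simp_all add: prod.map_comp prod.map_id0 comp_def)
  moreover have "map_prod \<sigma> \<sigma> x \<in> set (pairs2 n)" if x: "x \<in> set (pairs2 n)" for x
  proof -
    obtain i j where "x = (i, j)" "i \<in> {1..n}" "j \<in> {1..n}" "i \<noteq> j"
      using x by (auto simp: set_pairs2)
    then show ?thesis
      using permutes_in_image[OF assms] permutes_inj[OF assms] by (simp add: set_pairs2 inj_eq)
  qed
  ultimately show ?thesis
    unfolding rho2_eq_perm_mat by (simp add: perm_mat_power distinct_pairs2)
qed

lemma trace_rho2: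
  "trace (rho2 n \<pi>) = of_nat (card {x \<in> {1..n}. \<pi> x = x} * (card {x \<in> {1..n}. \<pi> x = x} - 1))"
proof -
  define F where "F = {x \<in> {1..n}. \<pi> x = x}"
  have "{x \<in> set (pairs2 n). map_prod \<pi> \<pi> x = x} = {(i, j). i \<in> F \<and> j \<in> F \<and> i \<noteq> j}"
    by (auto simp: F_def set_pairs2)
  then have "trace (rho2 n \<pi>) = of_nat (card {(i, j). i \<in> F \<and> j \<in> F \<and> i \<noteq> j})"
    by (simp only: rho2_eq_perm_mat trace_perm_mat[OF distinct_pairs2])
  also have "card {(i, j). i \<in> F \<and> j \<in> F \<and> i \<noteq> j} = card F * (card F - 1)"
    by (rule card_off_diagonal) (simp add: F_def)
  finally show ?thesis unfolding F_def .
qed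

section \<open>Periods and conjugacy\<close>

lemma funpow_eq_funpow_iff_mod_least_power:
  assumes "permutation p"
  shows "(p ^^ i) x = (p ^^ j) x \<longleftrightarrow> i mod least_power p x = j mod least_power p x"
proof -
  let ?k = "least_power p x"
  have k: "(p ^^ ?k) x = x" "?k > 0"
    using least_power_of_permutation[OF assms] by auto
  have "inj_on (\<lambda>i. (p ^^ i) x) {0..<?k}"
    using cycle_of_permutation[OF assms, of x] by (simp add: distinct_map)
  moreover have "(p ^^ i) x = (p ^^ (i mod ?k)) x" for i
    by (simp add: funpow_mod_eq k)
  ultimately show ?thesis
    using k(2) by (metis atLeastLessThan_iff inj_on_eq_iff mod_less_divisor zero_le)
qed

lemma card_orbit_eq_least_power:
  assumes "permutation p"
  shows "card (orbit p x) = least_power p x"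
proof -
  have "orbit p x = set (support p x)"
    unfolding orbit_altdef_permutation[OF assms] support_set[OF assms] by auto
  then have "card (orbit p x) = length (support p x)"
    using distinct_card[OF cycle_of_permutation[OF assms]] by simp
  then show ?thesis by simp
qed

lemma orbit_eq_if_in_orbit: "permutation p \<Longrightarrow> y \<in> orbit p x \<Longrightarrow> orbit p y = orbit p x"
  by (rule orbit_cyclic_eq3[OF cyclic_on_orbit'])

lemma least_power_eq_if_in_orbit:
  "permutation p \<Longrightarrow> y \<in> orbit p x \<Longrightarrow> least_power p y = least_power p x"
  by (metis card_orbit_eq_least_power orbit_eq_if_in_orbit)

lemma apply_in_orbit_iff:
  assumes "permutation p"
  shows "p z \<in> orbit p x \<longleftrightarrow> z \<in> orbit p x"
proof
  obtain S where "p permutes S"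
    using assms by (auto elim: permutation_permutesE)
  then show "p z \<in> orbit p x \<Longrightarrow> z \<in> orbit p x"
    by (rule cyclic_on_f_in[OF _ cyclic_on_orbit'[OF assms]])
qed (rule orbit.step)

lemma orbit_subset_if_closed:
  assumes "\<And>z. z \<in> A \<Longrightarrow> p z \<in> A" and "x \<in> A"
  shows "orbit p x \<subseteq> A"
proof
  fix y assume "y \<in> orbit p x"
  then show "y \<in> A" by induction (use assms in auto)
qed

lemma orbit_intertwining_bij:
  assumes p: "permutation p" and q: "permutation q"
    and same_period: "least_power p x = least_power q y"
  obtains g where "bij_betw g (orbit p x) (orbit q y)"
    and "\<And>z. z \<in> orbit p x \<Longrightarrow> g (p z) = q (g z)"
proof -
  define g where "g z = (q ^^ funpow_dist p x z) y" for z
  have g_funpow: "g ((p ^^ i) x) = (q ^^ i) y" for i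
  proof -
    have "(p ^^ i) x \<in> orbit p x"
      by (rule funpow_in_orbit[OF permutation_self_in_orbit[OF p]])
    then have "(p ^^ funpow_dist p x ((p ^^ i) x)) x = (p ^^ i) x"
      by (rule funpow_dist_prop)
    then show ?thesis
      unfolding g_def funpow_eq_funpow_iff_mod_least_power[OF p]
        funpow_eq_funpow_iff_mod_least_power[OF q] same_period .
  qed
  have intertwining: "g (p z) = q (g z)" if z: "z \<in> orbit p x" for z
  proof -
    obtain i where "z = (p ^^ i) x"
      using z by (auto simp: orbit_altdef_permutation[OF p])
    then show ?thesis
      using g_funpow[of "Suc i"] g_funpow[of i] by simp
  qed
  have "g ` orbit p x = orbit q (g x)"
    by (rule orbit_inverse[OF permutation_self_in_orbit[OF p]]) (simp add: intertwining)
  also have "g x = y"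
    using g_funpow[of 0] by simp
  finally have image: "g ` orbit p x = orbit q y" .
  moreover have "inj_on g (orbit p x)"
  proof (rule eq_card_imp_inj_on)
    show "finite (orbit p x)"
      by (rule finite_orbit[OF permutation_self_in_orbit[OF p]])
    show "card (g ` orbit p x) = card (orbit p x)"
      unfolding image card_orbit_eq_least_power[OF p] card_orbit_eq_least_power[OF q] same_period ..
  qed
  ultimately show ?thesis
    using that intertwining by (auto simp: bij_betw_def)
qed

definition period_count :: "('a \<Rightarrow> 'a) \<Rightarrow> 'a set \<Rightarrow> nat \<Rightarrow> nat" where
  "period_count p A k = card {x \<in> A. least_power p x = k}"

definition divisor_sum :: "(nat \<Rightarrow> nat) \<Rightarrow> nat \<Rightarrow> nat" where
  "divisor_sum c k = (\<Sum>d | d dvd k. c d)"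

lemma dvd_period_count:
  assumes p: "permutation p" and "finite A" and closed: "\<And>z. z \<in> A \<Longrightarrow> p z \<in> A"
  shows "k dvd period_count p A k"
proof -
  define P where "P = {x \<in> A. least_power p x = k}"
  have orbit_in_P: "orbit p x \<subseteq> P" if "x \<in> P" for x
    using that orbit_subset_if_closed[of A p, OF closed] least_power_eq_if_in_orbit[OF p]
    unfolding P_def by blast
  then have "\<Union> (orbit p ` P) = P"
    using permutation_self_in_orbit[OF p] by blast
  moreover have "k * card (orbit p ` P) = card (\<Union> (orbit p ` P))"
  proof (rule card_partition)
    show "finite (orbit p ` P)" "finite (\<Union> (orbit p ` P))"
      using \<open>finite A\<close> orbit_in_P by (auto simp: P_def intro: finite_subset)
    show "card c = k" if "c \<in> orbit p ` P" for c
      using that card_orbit_eq_least_power[OF p] by (auto simp: P_def)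
    show "c1 \<inter> c2 = {}" if "c1 \<in> orbit p ` P" "c2 \<in> orbit p ` P" "c1 \<noteq> c2" for c1 c2
      using that orbit_eq_if_in_orbit[OF p] by blast
  qed
  ultimately show ?thesis
    unfolding period_count_def P_def[symmetric] by (metis dvd_triv_left)
qed

lemma card_fixpoints_funpow:
  assumes "permutation p" and "finite A" and "k > 0"
  shows "card {x \<in> A. (p ^^ k) x = x} = divisor_sum (period_count p A) k"
proof -
  have "{x \<in> A. (p ^^ k) x = x} = (\<Union>d \<in> {d. d dvd k}. {x \<in> A. least_power p x = d})"
    using least_power_dvd[OF assms(1)] by auto
  also have "card \<dots> = divisor_sum (period_count p A) k"
    unfolding divisor_sum_def period_count_def
    using assms(2,3) by (intro card_UN_disjoint) auto
  finally show ?thesis .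
qed

lemma period_count_Diff_orbit:
  assumes p: "permutation p" and "finite A" and "orbit p x \<subseteq> A"
  shows "period_count p (A - orbit p x) k =
    period_count p A k - (if k = least_power p x then k else 0)"
proof -
  have "{z \<in> A - orbit p x. least_power p z = k} =
      {z \<in> A. least_power p z = k} - (if k = least_power p x then orbit p x else {})"
    using assms(3) least_power_eq_if_in_orbit[OF p] by auto
  moreover have "orbit p x \<subseteq> {z \<in> A. least_power p z = least_power p x}"
    using assms(3) least_power_eq_if_in_orbit[OF p] by auto
  ultimately show ?thesis
    using \<open>finite A\<close> finite_orbit[OF permutation_self_in_orbit[OF p]]
    by (simp add: period_count_def card_Diff_subset card_orbit_eq_least_power[OF p])
qed

lemma intertwining_bij_Un:
  assumes "bij_betw g C D" and "\<And>z. z \<in> C \<Longrightarrow> g (p z) = q (g z)"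
    and "bij_betw h A B" and "\<And>z. z \<in> A \<Longrightarrow> h (p z) = q (h z)"
    and "\<And>z. z \<in> C \<Longrightarrow> p z \<in> C" and "\<And>z. z \<in> A \<Longrightarrow> p z \<in> A"
    and "C \<inter> A = {}" and "D \<inter> B = {}"
  shows "\<exists>f. bij_betw f (C \<union> A) (D \<union> B) \<and> (\<forall>z\<in>C \<union> A. f (p z) = q (f z))"
proof (intro exI conjI)
  define f where "f z = (if z \<in> C then g z else h z)" for z
  show "bij_betw f (C \<union> A) (D \<union> B)"
  proof (rule bij_betw_combine)
    show "bij_betw f C D"
      using assms(1) by (rule bij_betw_cong[THEN iffD1, rotated]) (simp add: f_def)
    show "bij_betw f A B"
      using assms(3) by (rule bij_betw_cong[THEN iffD1, rotated]) (use assms(7) in \<open>auto simp: f_def\<close>)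
  qed (rule assms(8))
  show "\<forall>z\<in>C \<union> A. f (p z) = q (f z)"
    using assms(2,4-7) by (auto simp: f_def)
qed

lemma intertwining_bij_if_period_count_eq:
  assumes p: "permutation p" and q: "permutation q"
  shows "finite A \<Longrightarrow> finite B \<Longrightarrow> (\<And>z. z \<in> A \<Longrightarrow> p z \<in> A) \<Longrightarrow> (\<And>z. z \<in> B \<Longrightarrow> q z \<in> B) \<Longrightarrow>
    period_count p A = period_count q B \<Longrightarrow> \<exists>h. bij_betw h A B \<and> (\<forall>z\<in>A. h (p z) = q (h z))"
proof (induction "card A" arbitrary: A B rule: less_induct)
  case less
  note finite = less.prems(1,2) and closed = less.prems(3,4) and counts = less.prems(5)
  show ?case
  proof (cases "A = {}")
    case True
    have "B = {}"
    proof (rule ccontr)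
      assume "B \<noteq> {}"
      then obtain y where "y \<in> B" by blast
      then have "period_count q B (least_power q y) \<noteq> 0"
        using finite by (auto simp: period_count_def)
      then show False
        using counts[THEN fun_cong, of "least_power q y"] True by (simp add: period_count_def)
    qed
    with True show ?thesis by (auto simp: bij_betw_def)
  next
    case False
    then obtain x where x: "x \<in> A" by blast
    then have "period_count p A (least_power p x) \<noteq> 0"
      using finite(1) by (auto simp: period_count_def)
    then have "period_count q B (least_power p x) \<noteq> 0"
      using counts by simp
    then obtain y where y: "y \<in> B" "least_power q y = least_power p x"
      by (auto simp: period_count_def card_gt_0_iff)
    obtain g where g: "bij_betw g (orbit p x) (orbit q y)"
      and g_intertwining: "\<And>z. z \<in> orbit p x \<Longrightarrow> g (p z) = q (g z)"
      using orbit_intertwining_bij[OF p q y(2)[symmetric]] by blast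
    have orbit_x: "orbit p x \<subseteq> A"
      by (rule orbit_subset_if_closed) (use closed(1) x in auto)
    have orbit_y: "orbit q y \<subseteq> B"
      by (rule orbit_subset_if_closed) (use closed(2) y(1) in auto)
    define A' where "A' = A - orbit p x"
    define B' where "B' = B - orbit q y"
    have smaller: "card A' < card A"
      using finite(1) x permutation_self_in_orbit[OF p] by (auto simp: A'_def intro: psubset_card_mono)
    have closed_A': "p z \<in> A'" if "z \<in> A'" for z
      using that closed(1) apply_in_orbit_iff[OF p] by (auto simp: A'_def)
    have closed_B': "q z \<in> B'" if "z \<in> B'" for z
      using that closed(2) apply_in_orbit_iff[OF q] by (auto simp: B'_def)
    have "period_count p A' = period_count q B'"
      using period_count_Diff_orbit[OF p finite(1) orbit_x] period_count_Diff_orbit[OF q finite(2) orbit_y]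
        counts y(2) by (auto simp: A'_def B'_def)
    then have "\<exists>h'. bij_betw h' A' B' \<and> (\<forall>z\<in>A'. h' (p z) = q (h' z))"
      using finite by (intro less.hyps[OF smaller _ _ closed_A' closed_B']) (auto simp: A'_def B'_def)
    then obtain h' where h': "bij_betw h' A' B'" "\<forall>z\<in>A'. h' (p z) = q (h' z)"
      by blast
    have "\<exists>h. bij_betw h (orbit p x \<union> A') (orbit q y \<union> B') \<and>
        (\<forall>z\<in>orbit p x \<union> A'. h (p z) = q (h z))"
      using g_intertwining h'(2) closed_A'
      by (intro intertwining_bij_Un[OF g _ h'(1)]) (auto simp: A'_def B'_def intro: orbit.step)
    moreover have "orbit p x \<union> A' = A" "orbit q y \<union> B' = B"
      using orbit_x orbit_y by (auto simp: A'_def B'_def)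
    ultimately show ?thesis by simp
  qed
qed

lemma conjugate_if_period_count_eq:
  assumes \<sigma>: "\<sigma> permutes S" and \<tau>: "\<tau> permutes S" and "finite S"
    and counts: "period_count \<sigma> S = period_count \<tau> S"
  obtains \<pi> where "\<pi> permutes S" and "\<tau> = \<pi> \<circ> \<sigma> \<circ> Hilbert_Choice.inv \<pi>"
proof -
  have "permutation \<sigma>" "permutation \<tau>"
    using \<sigma> \<tau> \<open>finite S\<close> by (auto simp: permutation_permutes)
  then obtain h where h: "bij_betw h S S" and intertwining: "\<forall>z\<in>S. h (\<sigma> z) = \<tau> (h z)"
    using intertwining_bij_if_period_count_eq[OF _ _ \<open>finite S\<close> \<open>finite S\<close> _ _ counts]
      permutes_in_image[OF \<sigma>] permutes_in_image[OF \<tau>] by blast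
  define \<pi> where "\<pi> z = (if z \<in> S then h z else z)" for z
  have \<pi>: "\<pi> permutes S"
  proof (rule bij_imp_permutes)
    show "bij_betw \<pi> S S"
      using h by (rule bij_betw_cong[THEN iffD1, rotated]) (simp add: \<pi>_def)
  qed (simp add: \<pi>_def)
  have commute: "\<tau> (\<pi> z) = \<pi> (\<sigma> z)" for z
    using intertwining permutes_in_image[OF \<sigma>] permutes_not_in[OF \<sigma>] permutes_not_in[OF \<tau>]
      bij_betw_apply[OF h]
    by (cases "z \<in> S") (simp_all add: \<pi>_def)
  have "\<tau> = \<pi> \<circ> \<sigma> \<circ> Hilbert_Choice.inv \<pi>"
  proof
    fix z
    have "\<tau> z = \<tau> (\<pi> (Hilbert_Choice.inv \<pi> z))"
      using permutes_inverses(1)[OF \<pi>] by simp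
    also have "\<dots> = (\<pi> \<circ> \<sigma> \<circ> Hilbert_Choice.inv \<pi>) z"
      by (simp add: commute)
    finally show "\<tau> z = (\<pi> \<circ> \<sigma> \<circ> Hilbert_Choice.inv \<pi>) z" .
  qed
  with \<pi> show ?thesis by (rule that)
qed

section \<open>Recovering period counts from fixed point counts\<close>

lemma divisor_sum_eq:
  assumes "k > 0"
  shows "divisor_sum c k = c k + (\<Sum>d | d dvd k \<and> d < k. c d)"
proof -
  have "{d. d dvd k} = insert k {d. d dvd k \<and> d < k}"
    using assms by (auto dest: dvd_imp_le)
  then show ?thesis
    by (simp add: divisor_sum_def)
qed

lemma mult_pred_eq_mult_pred_cases:
  assumes "(a :: nat) * (a - 1) = b * (b - 1)"
  shows "a = b \<or> a \<le> 1 \<and> b \<le> 1"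
proof -
  have strict: "a * (a - 1) < b * (b - 1)" if "a < b" "b \<ge> 2" for a b :: nat
  proof -
    have "a * (a - 1) \<le> a * (b - 1)" using that by (intro mult_le_mono2 diff_le_mono) simp
    also have "\<dots> < b * (b - 1)" using that by simp
    finally show ?thesis .
  qed
  show ?thesis
  proof (rule contrapos_pp[OF assms])
    assume "\<not> (a = b \<or> a \<le> 1 \<and> b \<le> 1)"
    then have "a < b \<and> 2 \<le> b \<or> b < a \<and> 2 \<le> a" by auto
    then show "a * (a - 1) \<noteq> b * (b - 1)"
      using strict by (metis less_irrefl)
  qed
qed

lemma pronic_divisor_sum_eq_not_0_1:
  fixes c c' :: "nat \<Rightarrow> nat"
  assumes dvd: "\<And>k. k dvd c k" "\<And>k. k dvd c' k"
    and eq: "\<And>k. k > 0 \<Longrightarrow>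
      divisor_sum c k * (divisor_sum c k - 1) = divisor_sum c' k * (divisor_sum c' k - 1)"
    and at_one: "c 1 = 0" "c' 1 = 1"
    and nonzero: "\<exists>k. c k \<noteq> 0"
  shows False
proof -
  define P where "P d \<longleftrightarrow> 2 \<le> d \<and> (c d \<noteq> 0 \<or> c' d \<noteq> 0)" for d
  have "c 0 = 0"
    using dvd(1)[of 0] by simp
  then obtain k where "P k"
    using nonzero at_one unfolding P_def by (metis One_nat_def less_2_cases not_le)
  define d where "d = (LEAST d. P d)"
  have "P d"
    unfolding d_def by (rule LeastI[of P, OF \<open>P k\<close>])
  then have d: "d \<ge> 2" by (simp add: P_def)
  have zero_below: "c e = 0 \<and> c' e = 0" if "2 \<le> e" "e < d" for e
    using not_less_Least[of e P] that by (auto simp: d_def P_def)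
  have "{e. e dvd d \<and> e < d} = insert 1 {e. e dvd d \<and> 2 \<le> e \<and> e < d}"
    using d by (auto simp: numeral_2_eq_2 not_less_eq_eq le_Suc_eq)
  moreover have "finite {e. e dvd d \<and> 2 \<le> e \<and> e < d}"
    by (rule finite_subset[of _ "{..<d}"]) auto
  ultimately have "divisor_sum c d = c d" "divisor_sum c' d = c' d + 1"
    using zero_below at_one d by (simp_all add: divisor_sum_eq)
  then have "c d * (c d - 1) = (c' d + 1) * (c' d + 1 - 1)"
    using eq[of d] d by simp
  then consider "c d = c' d + 1" | "c d \<le> 1" "c' d + 1 \<le> 1"
    using mult_pred_eq_mult_pred_cases by blast
  then show False
  proof cases
    case 1
    then have "d dvd 1"
      using dvd[of d] by (metis dvd_add_right_iff)
    then show False using d by simp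
  next
    case 2
    then have "c d \<noteq> 1"
      using dvd(1)[of d] d by auto
    then show False
      using 2 \<open>P d\<close> by (simp add: P_def)
  qed
qed

lemma pronic_divisor_sum_eq_at_one:
  fixes c c' :: "nat \<Rightarrow> nat"
  assumes dvd: "\<And>k. k dvd c k" "\<And>k. k dvd c' k"
    and eq: "\<And>k. k > 0 \<Longrightarrow>
      divisor_sum c k * (divisor_sum c k - 1) = divisor_sum c' k * (divisor_sum c' k - 1)"
    and nonzero: "\<exists>k. c k \<noteq> 0" "\<exists>k. c' k \<noteq> 0"
  shows "c 1 = c' 1"
proof -
  have "divisor_sum f 1 = f 1" for f
    by (simp add: divisor_sum_eq)
  then have "c 1 * (c 1 - 1) = c' 1 * (c' 1 - 1)"
    using eq[of 1] by simp
  then consider "c 1 = c' 1" | "c 1 = 0" "c' 1 = 1" | "c 1 = 1" "c' 1 = 0"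
    using mult_pred_eq_mult_pred_cases by fastforce
  then show ?thesis
  proof cases
    case 2
    then show ?thesis
      using pronic_divisor_sum_eq_not_0_1[OF dvd eq] nonzero(1) by blast
  next
    case 3
    then show ?thesis
      using pronic_divisor_sum_eq_not_0_1[OF dvd(2,1) eq[symmetric]] nonzero(2) by blast
  qed
qed

lemma eq_if_pronic_divisor_sum_eq:
  fixes c c' :: "nat \<Rightarrow> nat"
  assumes dvd: "\<And>k. k dvd c k" "\<And>k. k dvd c' k"
    and eq: "\<And>k. k > 0 \<Longrightarrow>
      divisor_sum c k * (divisor_sum c k - 1) = divisor_sum c' k * (divisor_sum c' k - 1)"
    and nonzero: "\<exists>k. c k \<noteq> 0" "\<exists>k. c' k \<noteq> 0"
  shows "c = c'"
proof
  fix k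
  show "c k = c' k"
  proof (induction k rule: less_induct)
    case (less k)
    consider "k = 0" | "k = 1" | "k \<ge> 2" by linarith
    then show ?case
    proof cases
      case 1
      then show ?thesis using dvd[of 0] by simp
    next
      case 2
      then show ?thesis using pronic_divisor_sum_eq_at_one[OF dvd eq nonzero] by simp
    next
      case 3
      define R where "R = (\<Sum>d | d dvd k \<and> d < k. c d)"
      have "(\<Sum>d | d dvd k \<and> d < k. c' d) = R"
        unfolding R_def using less.IH by (intro sum.cong) auto
      then have "divisor_sum c k = c k + R" "divisor_sum c' k = c' k + R"
        using 3 by (simp_all add: divisor_sum_eq R_def)
      then consider "c k = c' k" | "c k \<le> 1" "c' k \<le> 1"
        using mult_pred_eq_mult_pred_cases[OF eq[of k]] 3 by fastforce
      then show ?thesis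
      proof cases
        case 2
        have small_multiple: "m = 0" if "k dvd m" "m \<le> 1" for m
          using that 3 by (cases "m = 1") auto
        show ?thesis
          using small_multiple[OF dvd(1) 2(1)] small_multiple[OF dvd(2) 2(2)] by simp
      qed
    qed
  qed
qed

lemma similar_rho2_pronic_divisor_sum_eq:
  assumes \<sigma>: "\<sigma> permutes {1..n}" and \<tau>: "\<tau> permutes {1..n}"
    and "similar_mat (rho2 n \<sigma>) (rho2 n \<tau>)" and "k > 0"
  shows "divisor_sum (period_count \<sigma> {1..n}) k * (divisor_sum (period_count \<sigma> {1..n}) k - 1) =
    divisor_sum (period_count \<tau> {1..n}) k * (divisor_sum (period_count \<tau> {1..n}) k - 1)"
proof -
  have perm: "permutation \<sigma>" "permutation \<tau>"
    using \<sigma> \<tau> by (auto simp: permutation_permutes)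
  have "trace (rho2 n \<sigma> ^\<^sub>m k) = trace (rho2 n \<tau> ^\<^sub>m k)"
    by (rule similar_mat_trace_power[OF assms(3)])
  then show ?thesis
    unfolding rho2_power[OF \<sigma>] rho2_power[OF \<tau>] trace_rho2 of_nat_eq_iff
      card_fixpoints_funpow[OF perm(1) finite_atLeastAtMost \<open>k > 0\<close>]
      card_fixpoints_funpow[OF perm(2) finite_atLeastAtMost \<open>k > 0\<close>] .
qed

theorem mainTheorem10:
  fixes n :: nat and \<sigma> \<tau> :: "nat \<Rightarrow> nat"
  assumes "n \<ge> 2"
    and "\<sigma> permutes {1..n}" and "\<tau> permutes {1..n}"
    and "similar_mat (rho2 n \<sigma>) (rho2 n \<tau>)"
  shows "conj_Sn n \<sigma> \<tau>"
proof -
  have "divisor_sum (period_count \<sigma> {1..n}) k * (divisor_sum (period_count \<sigma> {1..n}) k - 1) =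
      divisor_sum (period_count \<tau> {1..n}) k * (divisor_sum (period_count \<tau> {1..n}) k - 1)"
    if "k > 0" for k
    using similar_rho2_pronic_divisor_sum_eq[OF assms(2-4) that] .
  moreover have "k dvd period_count \<pi> {1..n} k" if "\<pi> permutes {1..n}" for \<pi> k
    using that permutes_in_image[OF that]
    by (intro dvd_period_count) (auto simp: permutation_permutes simp del: atLeastAtMost_iff)
  moreover have "period_count \<pi> {1..n} (least_power \<pi> 1) \<noteq> 0" for \<pi>
    unfolding period_count_def using assms(1) by (subst card_0_eq) (auto intro: exI[of _ 1])
  ultimately have "period_count \<sigma> {1..n} = period_count \<tau> {1..n}"
    using assms(2,3) by (intro eq_if_pronic_divisor_sum_eq) blast+
  then obtain \<pi> where "\<pi> permutes {1..n}" "\<tau> = \<pi> \<circ> \<sigma> \<circ> Hilbert_Choice.inv \<pi>"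
    using conjugate_if_period_count_eq[OF assms(2,3)] by blast
  then show ?thesis
    unfolding conj_Sn_def by blast
qed

end
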